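(* Let $d\ge1$, let $\pi_1,\dots,\pi_n>0$ with $\sum_i\pi_i=1$, and let $b_1,\dots,b_N$ be a basis of $V_d=\{p\in\mathbb{R}[x]_d:p(\mathbf1)=0\}$. Then there exists a positive definite $N\times N$ matrix $A$ such that $$\Big(\sum_{d'=0}^{d-1}\|x\|_\pi^{2d'}\Big)\,\|x-\mathbf1\|_\pi^2=b(x)^\top A\,b(x),\qquad b(x)=(b_1(x),\dots,b_N(x))^\top.$$
   Context: $\|x\|_\pi^2=\sum_i\pi_ix_i^2$; $\mathbf 1=(1,\dots,1)\in\mathbb{R}^n$; $\mathbb{R}[x]_k$ denotes real polynomials in $x=(x_1,\dots,x_n)$ of degree at most $k$. *)

theory Defs
  imports "HOL-Analysis.Analysis"
begin

definition monomial_fn :: "('n::finite \<Rightarrow> nat) \<Rightarrow> real^'n \<Rightarrow> real" where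
  "monomial_fn \<alpha> x = (\<Prod>i\<in>UNIV. (x $ i) ^ (\<alpha> i))"

definition poly_deg_le :: "nat \<Rightarrow> (real^'n::finite \<Rightarrow> real) set" where
  "poly_deg_le d = {p. \<exists>c :: ('n \<Rightarrow> nat) \<Rightarrow> real.
      p = (\<lambda>x. \<Sum>\<alpha>\<in>{\<alpha>. sum \<alpha> UNIV \<le> d}. c \<alpha> * monomial_fn \<alpha> x)}"

definition V_space :: "nat \<Rightarrow> (real^'n::finite \<Rightarrow> real) set" where
  "V_space d = {p \<in> poly_deg_le d. p (vec 1) = 0}"

definition is_basis_of :: "(nat \<Rightarrow> ('a \<Rightarrow> real)) \<Rightarrow> nat \<Rightarrow> ('a \<Rightarrow> real) set \<Rightarrow> bool" where
  "is_basis_of b N W \<longleftrightarrow>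
     (\<forall>j<N. b j \<in> W) \<and>
     (\<forall>c. (\<forall>x. (\<Sum>j<N. c j * b j x) = 0) \<longrightarrow> (\<forall>j<N. c j = 0)) \<and>
     (\<forall>p\<in>W. \<exists>c. p = (\<lambda>x. \<Sum>j<N. c j * b j x))"

definition pos_def_mat :: "nat \<Rightarrow> (nat \<Rightarrow> nat \<Rightarrow> real) \<Rightarrow> bool" where
  "pos_def_mat N A \<longleftrightarrow>
     (\<forall>i<N. \<forall>j<N. A i j = A j i) \<and>
     (\<forall>v. (\<exists>i<N. v i \<noteq> 0) \<longrightarrow> (\<Sum>i<N. \<Sum>j<N. v i * A i j * v j) > 0)"

definition wnorm2 :: "('n::finite \<Rightarrow> real) \<Rightarrow> real^'n \<Rightarrow> real" where
  "wnorm2 \<pi> x = (\<Sum>i\<in>UNIV. \<pi> i * (x $ i)^2)"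

end

theory Submission
  imports Defs
begin

text \<open>Expanding \<open>(\<Sum>\<^sub>i \<pi>\<^sub>i x\<^sub>i\<^sup>2)\<^sup>m\<close> over words \<open>l\<close> of length \<open>m\<close> writes the left-hand side as
  \<open>\<Sum> \<pi>\<^sup>l \<pi>\<^sub>j (x\<^sup>l (x\<^sub>j - 1))\<^sup>2\<close>, summed over all words \<open>l\<close> of length \<open>< d\<close> and indices \<open>j\<close>:
  a positive combination of squares of polynomials \<open>g\<^sub>k\<close> in \<open>V\<^sub>d\<close>. Telescoping
  \<open>x\<^sup>a\<^sup>l - 1 = (x\<^sup>l - 1) + x\<^sup>l (x\<^sub>a - 1)\<close> shows that the \<open>g\<^sub>k\<close> span \<open>V\<^sub>d\<close>. Writing
  \<open>g = M b\<close> gives the Gram matrix \<open>A = M\<^sup>T diag(w) M\<close>, which is positive definite because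
  \<open>M\<close> has a left inverse (the \<open>b\<^sub>i\<close> are themselves combinations of the \<open>g\<^sub>k\<close>).\<close>

lemma quadratic_form_gram:
  fixes u :: "nat \<Rightarrow> 'a::comm_semiring_1"
  assumes "finite K"
  shows "(\<Sum>i<N. \<Sum>j<N. u i * (\<Sum>k\<in>K. w k * M k i * M k j) * u j)
        = (\<Sum>k\<in>K. w k * (\<Sum>i<N. M k i * u i)^2)"
proof -
  have "(\<Sum>k\<in>K. w k * (\<Sum>i<N. M k i * u i)^2)
      = (\<Sum>k\<in>K. \<Sum>i<N. \<Sum>j<N. u i * (w k * M k i * M k j) * u j)"
    by (simp add: power2_eq_square sum_product sum_distrib_left mult_ac)
  also have "\<dots> = (\<Sum>i<N. \<Sum>j<N. \<Sum>k\<in>K. u i * (w k * M k i * M k j) * u j)"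
    by (subst sum.swap) (simp add: sum.swap[of _ K])
  also have "\<dots> = (\<Sum>i<N. \<Sum>j<N. u i * (\<Sum>k\<in>K. w k * M k i * M k j) * u j)"
    by (simp add: sum_distrib_left sum_distrib_right)
  finally show ?thesis by simp
qed

lemma pos_def_mat_gram:
  fixes w :: "'k \<Rightarrow> real"
  assumes fin: "finite K" and pos: "\<forall>k\<in>K. w k > 0"
    and left_inverse: "\<forall>j<N. \<forall>i<N. (\<Sum>k\<in>K. L j k * M k i) = (if i = j then 1 else 0)"
  shows "pos_def_mat N (\<lambda>i j. \<Sum>k\<in>K. w k * M k i * M k j)"
  unfolding pos_def_mat_def
proof (intro conjI allI impI)
  fix i j show "(\<Sum>k\<in>K. w k * M k i * M k j) = (\<Sum>k\<in>K. w k * M k j * M k i)"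
    by (simp add: mult_ac)
next
  fix v :: "nat \<Rightarrow> real" assume "\<exists>i<N. v i \<noteq> 0"
  then obtain j where j: "j < N" "v j \<noteq> 0" by blast
  let ?Mv = "\<lambda>k. \<Sum>i<N. M k i * v i"
  have "v j = (\<Sum>i<N. (\<Sum>k\<in>K. L j k * M k i) * v i)"
    using left_inverse j(1) by (simp add: if_distrib[of "\<lambda>t. t * _"] cong: if_cong)
  also have "\<dots> = (\<Sum>k\<in>K. L j k * ?Mv k)"
    by (simp add: sum_distrib_left sum_distrib_right mult.assoc sum.swap[of _ "{..<N}"])
  finally obtain k where "k \<in> K" "?Mv k \<noteq> 0"
    using j(2) by (metis (no_types, lifting) mult_zero_right sum.neutral)
  then have "(\<Sum>k\<in>K. w k * (?Mv k)^2) > 0"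
    using pos fin by (intro sum_pos2[where i=k]) (auto intro: less_imp_le)
  then show "(\<Sum>i<N. \<Sum>j<N. v i * (\<Sum>k\<in>K. w k * M k i * M k j) * v j) > 0"
    by (simp only: quadratic_form_gram[OF fin])
qed

lemma is_basis_of_coeffs_eq:
  assumes "is_basis_of b N W" and "\<forall>x. (\<Sum>i<N. c i * b i x) = (\<Sum>i<N. c' i * b i x)" and "j < N"
  shows "c j = c' j"
proof -
  have "\<forall>x. (\<Sum>i<N. (c i - c' i) * b i x) = 0"
    using assms(2) by (simp add: left_diff_distrib sum_subtractf)
  then show ?thesis using assms(1,3) unfolding is_basis_of_def by fastforce
qed

lemma sum_squares_eq_quadratic_form_in_basis:
  fixes w :: "'k \<Rightarrow> real" and g :: "'k \<Rightarrow> 'a \<Rightarrow> real"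
  assumes fin: "finite K" and pos: "\<forall>k\<in>K. w k > 0"
    and basis: "is_basis_of b N W" and gW: "\<forall>k\<in>K. g k \<in> W"
    and spans: "\<forall>p\<in>W. \<exists>c. \<forall>x. p x = (\<Sum>k\<in>K. c k * g k x)"
  shows "\<exists>A. pos_def_mat N A \<and>
     (\<forall>x. (\<Sum>k\<in>K. w k * (g k x)^2) = (\<Sum>i<N. \<Sum>j<N. b i x * A i j * b j x))"
proof -
  have "\<forall>k\<in>K. \<exists>c. \<forall>x. g k x = (\<Sum>i<N. c i * b i x)"
    using gW basis unfolding is_basis_of_def by metis
  then obtain M where M: "\<forall>k\<in>K. \<forall>x. g k x = (\<Sum>i<N. M k i * b i x)" by metis
  have "\<forall>j<N. \<exists>c. \<forall>x. b j x = (\<Sum>k\<in>K. c k * g k x)"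
    using spans basis unfolding is_basis_of_def by blast
  then obtain L where L: "\<forall>j<N. \<forall>x. b j x = (\<Sum>k\<in>K. L j k * g k x)" by metis
  have "\<forall>j<N. \<forall>i<N. (\<Sum>k\<in>K. L j k * M k i) = (if i = j then 1 else 0)"
  proof (intro allI impI)
    fix i j assume ij: "j < N" "i < N"
    have "(\<Sum>i<N. (\<Sum>k\<in>K. L j k * M k i) * b i x) = (\<Sum>i<N. (if i = j then 1 else 0) * b i x)"
      for x
    proof -
      have "(\<Sum>i<N. (\<Sum>k\<in>K. L j k * M k i) * b i x) = (\<Sum>k\<in>K. L j k * g k x)"
        using M by (simp add: sum_distrib_left sum_distrib_right mult.assoc sum.swap[of _ "{..<N}"])
      then show ?thesis using L ij(1) by (simp add: if_distrib[of "\<lambda>t. t * _"] cong: if_cong)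
    qed
    then show "(\<Sum>k\<in>K. L j k * M k i) = (if i = j then 1 else 0)"
      by (rule is_basis_of_coeffs_eq[OF basis allI ij(2), simplified])
  qed
  then have "pos_def_mat N (\<lambda>i j. \<Sum>k\<in>K. w k * M k i * M k j)"
    by (rule pos_def_mat_gram[OF fin pos])
  moreover have "(\<Sum>k\<in>K. w k * (g k x)^2)
      = (\<Sum>i<N. \<Sum>j<N. b i x * (\<Sum>k\<in>K. w k * M k i * M k j) * b j x)" for x
    using M by (simp add: quadratic_form_gram[OF fin])
  ultimately show ?thesis by blast
qed

definition word_monomial :: "'n::finite list \<Rightarrow> real^'n \<Rightarrow> real" where
  "word_monomial l x = (\<Prod>i\<leftarrow>l. x $ i)"

definition V_generator :: "'n::finite list \<times> 'n \<Rightarrow> real^'n \<Rightarrow> real" where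
  "V_generator = (\<lambda>(l, j) x. word_monomial l x * (x $ j - 1))"

definition word_weight :: "('n \<Rightarrow> real) \<Rightarrow> 'n list \<times> 'n \<Rightarrow> real" where
  "word_weight \<pi> = (\<lambda>(l, j). (\<Prod>i\<leftarrow>l. \<pi> i) * \<pi> j)"

lemma finite_lists_length_less: "finite {l::'a::finite list. length l < d}"
  by (rule finite_subset[OF _ finite_lists_length_le[OF finite_class.finite_UNIV, of d]]) auto

lemma finite_monomial_exponents: "finite {\<alpha>::'n::finite \<Rightarrow> nat. sum \<alpha> UNIV \<le> d}"
proof (rule finite_subset)
  show "{\<alpha>::'n \<Rightarrow> nat. sum \<alpha> UNIV \<le> d} \<subseteq> PiE UNIV (\<lambda>_. {..d})"
  proof
    fix \<alpha> :: "'n \<Rightarrow> nat" assume "\<alpha> \<in> {\<alpha>. sum \<alpha> UNIV \<le> d}"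
    then have "\<alpha> i \<le> d" for i using member_le_sum[of i UNIV \<alpha>] by auto
    then show "\<alpha> \<in> PiE UNIV (\<lambda>_. {..d})" by (auto simp: PiE_def extensional_def)
  qed
qed (rule finite_PiE, auto)

lemma count_list_Cons_fun: "count_list (a # l) = (\<lambda>i. count_list l i + (if i = a then 1 else 0))"
  by (auto simp: fun_eq_iff)

lemma sum_add_unit_vector:
  "sum (\<lambda>i. \<alpha> i + (if i = a then 1 else 0)) (UNIV::'n::finite set) = sum \<alpha> UNIV + 1"
  by (simp add: sum.distrib)

lemma monomial_fn_add_unit_vector:
  "monomial_fn (\<lambda>i. \<alpha> i + (if i = a then 1 else 0)) x = x $ a * monomial_fn \<alpha> x"
proof -
  have "monomial_fn (\<lambda>i. \<alpha> i + (if i = a then 1 else 0)) x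
      = (\<Prod>i\<in>UNIV. (x $ i) ^ \<alpha> i * (if i = a then x $ i else 1))"
    unfolding monomial_fn_def by (rule prod.cong) (auto simp: power_add)
  then show ?thesis by (simp add: prod.distrib monomial_fn_def)
qed

lemma sum_count_list_UNIV: "sum (count_list l) (UNIV::'n::finite set) = length l"
  by (induction l) (simp_all add: count_list_Cons_fun sum_add_unit_vector)

lemma monomial_fn_count_list: "monomial_fn (count_list l) x = word_monomial l x"
  by (induction l) (simp_all add: count_list_Cons_fun monomial_fn_add_unit_vector
      monomial_fn_def word_monomial_def)

lemma surj_count_list: "\<exists>l::'n::finite list. count_list l = \<alpha>"
proof (induction "sum \<alpha> UNIV" arbitrary: \<alpha>)
  case 0
  then show ?case by (intro exI[of _ "[]"]) (simp add: fun_eq_iff)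
next
  case (Suc n)
  then obtain a where a: "\<alpha> a > 0" by (metis gr0I sum.neutral nat.distinct(1))
  define \<alpha>' where "\<alpha>' i = \<alpha> i - (if i = a then 1 else 0)" for i
  have \<alpha>: "\<alpha> = (\<lambda>i. \<alpha>' i + (if i = a then 1 else 0))"
    using a by (auto simp: fun_eq_iff \<alpha>'_def)
  have "sum \<alpha> UNIV = sum \<alpha>' UNIV + 1"
    by (subst \<alpha>) (rule sum_add_unit_vector)
  then have "n = sum \<alpha>' UNIV" using Suc(2) by simp
  then obtain l where "count_list l = \<alpha>'" using Suc(1) by blast
  then have "count_list (a # l) = \<alpha>" by (simp add: count_list_Cons_fun \<alpha>)
  then show ?case by blast
qed

lemma monomial_diff_in_poly_deg_le:
  assumes "sum \<alpha> UNIV \<le> d" and "sum \<beta> UNIV \<le> d"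
  shows "(\<lambda>x. monomial_fn \<beta> x - monomial_fn \<alpha> x) \<in> poly_deg_le d"
proof -
  define c where "c \<gamma> = (if \<gamma> = \<beta> then 1 else 0) - (if \<gamma> = \<alpha> then 1 else 0 :: real)" for \<gamma>
  have "(\<Sum>\<gamma>\<in>{\<gamma>. sum \<gamma> UNIV \<le> d}. c \<gamma> * monomial_fn \<gamma> x) = monomial_fn \<beta> x - monomial_fn \<alpha> x"
    for x :: "real^'a"
    using assms by (simp add: c_def left_diff_distrib sum_subtractf if_distrib[of "\<lambda>t. t * _"]
        sum.delta[OF finite_monomial_exponents] cong: if_cong)
  then show ?thesis unfolding poly_deg_le_def by (auto intro!: exI[of _ c])
qed

lemma V_generator_in_V_space:
  assumes "length l < d"
  shows "V_generator (l, j) \<in> V_space d"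
proof -
  have "V_generator (l, j)
      = (\<lambda>x. monomial_fn (\<lambda>i. count_list l i + (if i = j then 1 else 0)) x - monomial_fn (count_list l) x)"
    by (simp add: fun_eq_iff V_generator_def monomial_fn_add_unit_vector monomial_fn_count_list
        algebra_simps)
  also have "\<dots> \<in> poly_deg_le d"
    using assms by (intro monomial_diff_in_poly_deg_le) (simp_all add: sum_add_unit_vector sum_count_list_UNIV)
  finally show ?thesis by (simp add: V_space_def V_generator_def word_monomial_def)
qed

lemma word_monomial_minus_one_in_span:
  assumes "length l \<le> d"
  shows "\<exists>c. \<forall>x. word_monomial l x - 1 = (\<Sum>k\<in>{l. length l < d} \<times> UNIV. c k * V_generator k x)"
  using assms
proof (induction l)
  case Nil
  show ?case by (intro exI[of _ "\<lambda>_. 0"]) (simp add: word_monomial_def)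
next
  case (Cons a l)
  then obtain c where c: "\<forall>x. word_monomial l x - 1 = (\<Sum>k\<in>{l. length l < d} \<times> UNIV. c k * V_generator k x)"
    by auto
  have la: "(l, a) \<in> {l. length l < d} \<times> UNIV" using Cons.prems by simp
  have "word_monomial (a # l) x - 1 = (word_monomial l x - 1) + V_generator (l, a) x" for x
    by (simp add: V_generator_def word_monomial_def algebra_simps)
  then have "word_monomial (a # l) x - 1
      = (\<Sum>k\<in>{l. length l < d} \<times> UNIV. (c k + (if k = (l, a) then 1 else 0)) * V_generator k x)" for x
    using c la by (simp add: distrib_right sum.distrib if_distrib[of "\<lambda>t. t * _"]
        finite_lists_length_less cong: if_cong)
  then show ?case by (intro exI allI)
qed

lemma V_space_spanned_by_generators:
  fixes p :: "real^'n::finite \<Rightarrow> real"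
  assumes "p \<in> V_space d"
  shows "\<exists>c. \<forall>x. p x = (\<Sum>k\<in>{l. length l < d} \<times> UNIV. c k * V_generator k x)"
proof -
  let ?S = "{\<alpha>::'n \<Rightarrow> nat. sum \<alpha> UNIV \<le> d}" and ?G = "{l::'n list. length l < d} \<times> UNIV"
  obtain a where p: "p = (\<lambda>x. \<Sum>\<alpha>\<in>?S. a \<alpha> * monomial_fn \<alpha> x)" and "p (vec 1) = 0"
    using assms unfolding V_space_def poly_deg_le_def by blast
  then have a_sum: "(\<Sum>\<alpha>\<in>?S. a \<alpha>) = 0" by (simp add: monomial_fn_def)
  have "\<forall>\<alpha>\<in>?S. \<exists>c. \<forall>x. monomial_fn \<alpha> x - 1 = (\<Sum>k\<in>?G. c k * V_generator k x)"
  proof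
    fix \<alpha> assume "\<alpha> \<in> ?S"
    moreover obtain l where l: "count_list l = \<alpha>" using surj_count_list by blast
    ultimately have "length l \<le> d" using sum_count_list_UNIV[of l] by simp
    then show "\<exists>c. \<forall>x. monomial_fn \<alpha> x - 1 = (\<Sum>k\<in>?G. c k * V_generator k x)"
      unfolding l[symmetric] monomial_fn_count_list by (rule word_monomial_minus_one_in_span)
  qed
  then have "\<exists>C. \<forall>\<alpha>\<in>?S. \<forall>x. monomial_fn \<alpha> x - 1 = (\<Sum>k\<in>?G. C \<alpha> k * V_generator k x)"
    by (rule bchoice)
  then obtain C where C: "\<forall>\<alpha>\<in>?S. \<forall>x. monomial_fn \<alpha> x - 1 = (\<Sum>k\<in>?G. C \<alpha> k * V_generator k x)"
    by blast
  have "p x = (\<Sum>k\<in>?G. (\<Sum>\<alpha>\<in>?S. a \<alpha> * C \<alpha> k) * V_generator k x)" for x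
  proof -
    have "p x = (\<Sum>\<alpha>\<in>?S. a \<alpha> * (monomial_fn \<alpha> x - 1))"
      using a_sum by (simp add: p right_diff_distrib sum_subtractf)
    also have "\<dots> = (\<Sum>\<alpha>\<in>?S. \<Sum>k\<in>?G. a \<alpha> * (C \<alpha> k * V_generator k x))"
      using C by (simp add: sum_distrib_left)
    also have "\<dots> = (\<Sum>k\<in>?G. (\<Sum>\<alpha>\<in>?S. a \<alpha> * C \<alpha> k) * V_generator k x)"
      by (subst sum.swap) (simp add: sum_distrib_right mult.assoc)
    finally show ?thesis .
  qed
  then show ?thesis by (intro exI allI)
qed

lemma power_sum_eq_sum_words:
  fixes f :: "'n::finite \<Rightarrow> 'a::comm_semiring_1"
  shows "(\<Sum>i\<in>UNIV. f i) ^ m = (\<Sum>l\<in>{l::'n list. length l = m}. \<Prod>i\<leftarrow>l. f i)"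
proof (induction m)
  case 0
  have "{l::'n list. length l = 0} = {[]}" by auto
  then show ?case by simp
next
  case (Suc m)
  have words: "{l::'n list. length l = Suc m} = (\<lambda>(i, l). i # l) ` (UNIV \<times> {l. length l = m})"
    by (auto simp: length_Suc_conv image_def)
  have "inj_on (\<lambda>(i, l). i # l) (UNIV \<times> {l::'n list. length l = m})"
    by (auto simp: inj_on_def)
  then have "(\<Sum>l\<in>{l::'n list. length l = Suc m}. \<Prod>i\<leftarrow>l. f i)
      = (\<Sum>(i, l)\<in>UNIV \<times> {l::'n list. length l = m}. f i * (\<Prod>i\<leftarrow>l. f i))"
    unfolding words by (subst sum.reindex) (simp_all add: case_prod_beta)
  also have "\<dots> = (\<Sum>i\<in>UNIV. \<Sum>l\<in>{l::'n list. length l = m}. f i * (\<Prod>i\<leftarrow>l. f i))"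
    by (rule sum.cartesian_product[symmetric])
  also have "\<dots> = (\<Sum>i\<in>UNIV. f i) ^ Suc m"
    by (simp add: Suc sum_product)
  finally show ?case ..
qed

lemma sum_lists_length_less:
  "(\<Sum>m<d. \<Sum>l\<in>{l::'a::finite list. length l = m}. f l) = (\<Sum>l\<in>{l. length l < d}. f l)"
proof (induction d)
  case (Suc d)
  have "{l::'a list. length l < Suc d} = {l. length l < d} \<union> {l. length l = d}" by auto
  then have "sum f {l::'a list. length l < Suc d} = sum f {l. length l < d} + sum f {l. length l = d}"
    using finite_lists_length_eq[OF finite_class.finite_UNIV, of d]
    by (simp only:) (rule sum.union_disjoint, auto simp: finite_lists_length_less)
  then show ?case using Suc by simp
qed simp

lemma prod_list_map_pos:
  "(\<And>i. 0 < f i) \<Longrightarrow> 0 < (\<Prod>i\<leftarrow>l. f i :: 'b::linordered_semidom)"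
  by (induction l) simp_all

lemma weighted_geometric_sum_eq_sum_squares:
  fixes \<pi> :: "'n::finite \<Rightarrow> real"
  shows "(\<Sum>m<d. (wnorm2 \<pi> x) ^ m) * wnorm2 \<pi> (x - vec 1)
       = (\<Sum>k\<in>{l. length l < d} \<times> UNIV. word_weight \<pi> k * (V_generator k x)^2)"
proof -
  have "(wnorm2 \<pi> x) ^ m = (\<Sum>l\<in>{l. length l = m}. (\<Prod>i\<leftarrow>l. \<pi> i) * (word_monomial l x)^2)" for m
  proof -
    have "(\<Prod>i\<leftarrow>l. \<pi> i * (x $ i)^2) = (\<Prod>i\<leftarrow>l. \<pi> i) * (word_monomial l x)^2" for l
      by (induction l) (simp_all add: word_monomial_def power_mult_distrib)
    then show ?thesis by (simp add: wnorm2_def power_sum_eq_sum_words)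
  qed
  then have "(\<Sum>m<d. (wnorm2 \<pi> x) ^ m) * wnorm2 \<pi> (x - vec 1)
      = (\<Sum>l\<in>{l. length l < d}. (\<Prod>i\<leftarrow>l. \<pi> i) * (word_monomial l x)^2)
        * (\<Sum>j\<in>UNIV. \<pi> j * (x $ j - 1)^2)"
    by (simp add: sum_lists_length_less wnorm2_def)
  also have "\<dots> = (\<Sum>(l, j)\<in>{l. length l < d} \<times> UNIV.
      ((\<Prod>i\<leftarrow>l. \<pi> i) * (word_monomial l x)^2) * (\<pi> j * (x $ j - 1)^2))"
    by (simp add: sum_product sum.cartesian_product)
  also have "\<dots> = (\<Sum>k\<in>{l. length l < d} \<times> UNIV. word_weight \<pi> k * (V_generator k x)^2)"
    by (intro sum.cong refl) (auto simp: word_weight_def V_generator_def power_mult_distrib)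
  finally show ?thesis .
qed

theorem mainTheorem9:
  fixes d N :: nat and \<pi> :: "'n::finite \<Rightarrow> real" and b :: "nat \<Rightarrow> (real^'n \<Rightarrow> real)"
  assumes "d \<ge> 1"
    and "\<forall>i. \<pi> i > 0" and "(\<Sum>i\<in>UNIV. \<pi> i) = 1"
    and "is_basis_of b N (V_space d)"
  shows "\<exists>A. pos_def_mat N A \<and>
     (\<forall>x::real^'n. (\<Sum>d'<d. (wnorm2 \<pi> x) ^ d') * wnorm2 \<pi> (x - vec 1)
        = (\<Sum>i<N. \<Sum>j<N. b i x * A i j * b j x))"
proof -
  let ?G = "{l::'n list. length l < d} \<times> (UNIV :: 'n set)"
  have "finite ?G" by (simp add: finite_lists_length_less)
  moreover have "\<forall>k\<in>?G. word_weight \<pi> k > 0"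
    using assms(2) by (auto simp: word_weight_def intro!: mult_pos_pos prod_list_map_pos)
  moreover have "\<forall>k\<in>?G. V_generator k \<in> V_space d"
    by (auto intro: V_generator_in_V_space)
  moreover have "\<forall>p\<in>V_space d. \<exists>c. \<forall>x. p x = (\<Sum>k\<in>?G. c k * V_generator k x)"
    using V_space_spanned_by_generators by blast
  ultimately show ?thesis
    unfolding weighted_geometric_sum_eq_sum_squares
    by (rule sum_squares_eq_quadratic_form_in_basis[OF _ _ assms(4)])
qed

end
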